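(* Let $q$ be a prime power, $k \ge 2$, $n = (q^k-1)/(q-1)$, and let $\mathcal{C} \subseteq \mathbb{F}_q^n$ be the $q$-ary simplex code of dimension $k$. Then $$\mathbb{E}[\mathcal{C}] = k + \sum_{i=1}^{k} \frac{q^{i-1}-1}{q^k - q^{i-1}}.$$
   Context: The $q$-ary simplex code of dimension $k$ is the code generated by a $k \times n$ matrix whose columns are representatives of all nonzero vectors of $\mathbb{F}_q^k$ up to nonzero scalar multiples, one per class (so $n=(q^k-1)/(q-1)$). For a linear code $\mathcal{C}\subseteq\mathbb{F}_q^n$ of dimension $k$, $\mathbb{E}[\mathcal{C}]$ is defined as $\mathbb{E}[G]$ for any generator matrix $G\in\mathbb{F}_q^{k\times n}$ of $\mathcal{C}$ (this does not depend on the choice of $G$), where $\mathbb{E}[G]$ is the expected number of draws when columns of $G$ are drawn independently and uniformly at random from its $n$ columns (with repetition) until the drawn columns span $\mathbb{F}_q^k$. *)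

theory Defs
  imports "HOL-Analysis.Analysis"
begin

definition stop_count :: "'a::field^'n::finite^'k::finite \<Rightarrow> nat \<Rightarrow> nat" where
  "stop_count G t = card {js \<in> {..<t} \<rightarrow>\<^sub>E (UNIV :: 'n set).
       vec.span ((\<lambda>i. column (js i) G) ` {..<t}) = UNIV \<and>
       vec.span ((\<lambda>i. column (js i) G) ` {..<t - 1}) \<noteq> UNIV}"

text \<open>Expected number of independent uniform draws (with repetition) of columns of G
  until the drawn columns span F^k:  sum over t of t * P(T = t), where
  P(T = t) = stop_count G t / n^t.\<close>
definition expected_draws :: "'a::field^'n::finite^'k::finite \<Rightarrow> real" where
  "expected_draws G = (\<Sum>t. real t * (real (stop_count G t) / real CARD('n) ^ t))"

definition simplex_generator :: "'a::field^'n::finite^'k::finite \<Rightarrow> bool" where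
  "simplex_generator G \<longleftrightarrow>
     (\<forall>j. column j G \<noteq> 0) \<and>
     (\<forall>v::'a^'k. v \<noteq> 0 \<longrightarrow> (\<exists>!j. \<exists>c. c \<noteq> 0 \<and> v = c *s column j G))"

end

theory Submission
  imports Defs
begin

text \<open>Follow the dimension \<open>d\<close> of the span of the columns drawn so far. In the simplex code
  every \<open>d\<close>-dimensional subspace contains exactly \<open>(q^d - 1)/(q - 1)\<close> columns, so the next
  draw stays inside the current span with probability \<open>p d = (q^d - 1)/(q^k - 1)\<close>, whatever
  that span is. Hence the dimension performs a Markov chain that waits a geometric time with
  success probability \<open>1 - p d\<close> at each level \<open>d < k\<close>, and the expected number of draws is
  \<open>\<Sum>d<k. 1/(1 - p d)\<close>, where \<open>1/(1 - p d) = 1 + (q^d - 1)/(q^k - q^d)\<close>.\<close>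

lemma two_le_card_field: "2 \<le> CARD('a::{finite,field})"
  using card_mono[of UNIV "{0::'a, 1}"] by simp

lemma card_span_eq_power_dim:
  fixes S :: "('a::{finite,field}^'k) set"
  shows "card (vec.span S) = CARD('a) ^ vec.dim S"
proof -
  obtain B where "B \<subseteq> S" and indep: "vec.independent B" and "S \<subseteq> vec.span B"
    and card_B: "card B = vec.dim S"
    using vec.basis_exists by blast
  have span_S: "vec.span S = vec.span B"
    using \<open>B \<subseteq> S\<close> \<open>S \<subseteq> vec.span B\<close> by (simp add: vec.span_eq vec.span_superset subset_trans)
  define comb where "comb u = (\<Sum>v\<in>B. u v *s v)" for u :: "'a^'k \<Rightarrow> 'a"
  have "bij_betw comb (B \<rightarrow>\<^sub>E UNIV) (vec.span B)"
  proof (rule bij_betw_imageI)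
    show "inj_on comb (B \<rightarrow>\<^sub>E UNIV)"
    proof (rule inj_onI)
      fix u u' assume u: "u \<in> B \<rightarrow>\<^sub>E UNIV" and u': "u' \<in> B \<rightarrow>\<^sub>E UNIV" and "comb u = comb u'"
      then have diff: "(\<Sum>v\<in>B. (u v - u' v) *s v) = 0"
        by (simp add: comb_def sum_subtractf)
      then have "u v - u' v = 0" if "v \<in> B" for v
        using vec.independentD[OF indep finite subset_refl diff that] by (simp only:)
      then show "u = u'" using u u' by (auto intro: PiE_ext)
    qed
    show "comb ` (B \<rightarrow>\<^sub>E UNIV) = vec.span B"
    proof
      show "comb ` (B \<rightarrow>\<^sub>E UNIV) \<subseteq> vec.span B"
        by (auto simp: comb_def intro: vec.span_sum vec.span_scale vec.span_base)
      show "vec.span B \<subseteq> comb ` (B \<rightarrow>\<^sub>E UNIV)"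
      proof
        fix x assume "x \<in> vec.span B"
        then obtain u where "x = (\<Sum>v\<in>B. u v *s v)"
          using vec.span_finite[of B] by auto
        then have "x = comb (restrict u B)" by (simp add: comb_def)
        then show "x \<in> comb ` (B \<rightarrow>\<^sub>E UNIV)" by (intro image_eqI[of x comb "restrict u B"]) simp_all
      qed
    qed
  qed
  then have "card (vec.span B) = card (B \<rightarrow>\<^sub>E (UNIV :: 'a set))"
    by (simp add: bij_betw_same_card)
  also have "\<dots> = CARD('a) ^ card B" by (simp add: card_PiE)
  finally show ?thesis by (simp add: span_S card_B)
qed

lemma vec_span_eq_UNIV_iff_dim:
  "vec.span (W :: ('a::field^'k) set) = UNIV \<longleftrightarrow> CARD('k) \<le> vec.dim W"
  by (metis dim_subset_UNIV_cart_gen le_antisym vec.dim_eq_full vec.dim_span vec.span_UNIV vec_dim_card)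

lemma sums_linear_recurrence:
  fixes a b :: "nat \<Rightarrow> real"
  assumes "p < 1" and a_nonneg: "\<And>t. 0 \<le> a t" and "a 0 = 0"
    and rec: "\<And>t. a (Suc t) = p * a t + b t"
    and b_nonneg: "\<And>t. 0 \<le> b t" and b_sums: "b sums B"
  shows "a sums (B / (1 - p))"
proof -
  have partial_sums: "sum a {..<Suc T} = p * sum a {..<T} + sum b {..<T}" for T
    by (simp add: sum.lessThan_Suc_shift rec sum.distrib sum_distrib_left \<open>a 0 = 0\<close>
        del: sum.lessThan_Suc)
  have "sum a {..<T} \<le> B / (1 - p)" for T
  proof -
    have "sum a {..<T} \<le> sum a {..<Suc T}"
      using a_nonneg by simp
    also have "\<dots> \<le> p * sum a {..<T} + B"
      using partial_sums sum_le_suminf[OF sums_summable[OF b_sums]] b_nonneg b_sums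
      by (simp add: sums_iff)
    finally show ?thesis
      using \<open>p < 1\<close> by (simp add: field_simps)
  qed
  then obtain A where a_sums: "a sums A"
    using a_nonneg summableI_nonneg_bounded summable_sums by blast
  have "(\<lambda>t. a (Suc t)) sums A"
    using a_sums sums_Suc_iff[of a] \<open>a 0 = 0\<close> by simp
  moreover have "(\<lambda>t. a (Suc t)) sums (p * A + B)"
    unfolding rec by (intro sums_add sums_mult a_sums b_sums)
  ultimately have "A = p * A + B"
    by (rule sums_unique2)
  then have "A = B / (1 - p)"
    using \<open>p < 1\<close> by (simp add: field_simps)
  with a_sums show ?thesis by simp
qed

text \<open>If \<open>y\<close> is the law of a waiting time \<open>Y\<close>, then \<open>x\<close> is the law of \<open>Y\<close> plus an independent
  geometric waiting time with success probability \<open>1 - p\<close>.\<close>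
lemma sums_geometric_delay:
  fixes x y :: "nat \<Rightarrow> real"
  assumes "0 \<le> p" "p < 1" and "\<And>t. 0 \<le> x t" and "\<And>t. 0 \<le> y t"
    and "x 0 = 0" and rec: "\<And>t. x (Suc t) = p * x t + (1 - p) * y t"
    and y_sums: "y sums 1" and y_mean: "(\<lambda>t. real t * y t) sums M"
  shows "x sums 1" and "(\<lambda>t. real t * x t) sums (M + 1 / (1 - p))"
proof -
  have "x sums ((1 - p) * 1 / (1 - p))"
    by (rule sums_linear_recurrence[where b = "\<lambda>t. (1 - p) * y t"])
      (use assms sums_mult[OF y_sums, of "1 - p"] in auto)
  then show x_sums: "x sums 1"
    using \<open>p < 1\<close> by simp
  have "(\<lambda>t. real t * x t) sums ((p * 1 + (1 - p) * (M + 1)) / (1 - p))"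
  proof (rule sums_linear_recurrence)
    show "real (Suc t) * x (Suc t) = p * (real t * x t) + (p * x t + (1 - p) * (real t * y t + y t))"
      for t by (simp add: rec algebra_simps)
    show "(\<lambda>t. p * x t + (1 - p) * (real t * y t + y t)) sums (p * 1 + (1 - p) * (M + 1))"
      by (intro sums_add sums_mult x_sums y_mean y_sums)
  qed (use assms in auto)
  moreover have "(p * 1 + (1 - p) * (M + 1)) / (1 - p) = M + 1 / (1 - p)"
    using \<open>p < 1\<close> by (simp add: field_simps)
  ultimately show "(\<lambda>t. real t * x t) sums (M + 1 / (1 - p))"
    by simp
qed

text \<open>\<open>hitting_time_prob k p d t\<close> is the probability that the chain on \<open>{d..k}\<close> which stays at
  state \<open>i\<close> with probability \<open>p i\<close> and otherwise moves to \<open>i + 1\<close> first reaches \<open>k\<close> at step \<open>t\<close>.\<close>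
fun hitting_time_prob :: "nat \<Rightarrow> (nat \<Rightarrow> real) \<Rightarrow> nat \<Rightarrow> nat \<Rightarrow> real" where
  "hitting_time_prob k p d 0 = (if k \<le> d then 1 else 0)"
| "hitting_time_prob k p d (Suc t) = (if k \<le> d then 0
     else p d * hitting_time_prob k p d t + (1 - p d) * hitting_time_prob k p (Suc d) t)"

lemma hitting_time_prob_nonneg:
  assumes "\<And>d. d < k \<Longrightarrow> 0 \<le> p d \<and> p d \<le> 1"
  shows "0 \<le> hitting_time_prob k p d t"
  using assms by (induction t arbitrary: d) auto

lemma hitting_time_prob_sums:
  assumes p: "\<And>d. d < k \<Longrightarrow> 0 \<le> p d \<and> p d < 1" and "d \<le> k"
  shows "hitting_time_prob k p d sums 1
    \<and> (\<lambda>t. real t * hitting_time_prob k p d t) sums (\<Sum>i = d..<k. 1 / (1 - p i))"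
  using \<open>d \<le> k\<close>
proof (induction d rule: inc_induct)
  case base
  have "hitting_time_prob k p k = (\<lambda>t. if t = 0 then 1 else 0)"
    by (rule ext, case_tac t) auto
  moreover have "(\<lambda>t. real t * hitting_time_prob k p k t) = (\<lambda>t. 0)"
    by (rule ext, case_tac t) auto
  ultimately show ?case
    using sums_single[of 0 "\<lambda>_. 1 :: real"] by simp
next
  case (step d)
  have "0 \<le> p d" "p d < 1" and start: "hitting_time_prob k p d 0 = 0"
    using p \<open>d < k\<close> by auto
  have rec: "hitting_time_prob k p d (Suc t)
      = p d * hitting_time_prob k p d t + (1 - p d) * hitting_time_prob k p (Suc d) t" for t
    using \<open>d < k\<close> by simp
  have nonneg: "0 \<le> hitting_time_prob k p d' t" for d' t
    using p by (intro hitting_time_prob_nonneg) (simp add: less_imp_le)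
  note delay = sums_geometric_delay[OF \<open>0 \<le> p d\<close> \<open>p d < 1\<close> nonneg nonneg start rec
      conjunct1[OF step.IH] conjunct2[OF step.IH]]
  have "(\<Sum>i = d..<k. 1 / (1 - p i)) = 1 / (1 - p d) + (\<Sum>i = Suc d..<k. 1 / (1 - p i))"
    using \<open>d < k\<close> by (simp add: sum.atLeast_Suc_lessThan)
  with delay show ?case by (simp add: add.commute)
qed

lemma card_PiE_filter_eq_card_lists:
  fixes A :: "'a set"
  shows "card {f \<in> {..<t} \<rightarrow>\<^sub>E A. P (map f [0..<t])} = card {xs. set xs \<subseteq> A \<and> length xs = t \<and> P xs}"
proof (rule bij_betw_same_card)
  have map_restrict_nth: "map (restrict (nth xs) {..<t}) [0..<t] = xs" if "length xs = t" for xs :: "'a list"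
    using that by (intro nth_equalityI) simp_all
  show "bij_betw (\<lambda>f. map f [0..<t]) {f \<in> {..<t} \<rightarrow>\<^sub>E A. P (map f [0..<t])}
      {xs. set xs \<subseteq> A \<and> length xs = t \<and> P xs}"
  proof (rule bij_betw_byWitness[where f' = "\<lambda>xs. restrict (nth xs) {..<t}"])
    show "\<forall>f\<in>{f \<in> {..<t} \<rightarrow>\<^sub>E A. P (map f [0..<t])}. restrict (nth (map f [0..<t])) {..<t} = f"
      by (auto simp: PiE_def extensional_def fun_eq_iff)
    show "\<forall>xs\<in>{xs. set xs \<subseteq> A \<and> length xs = t \<and> P xs}. map (restrict (nth xs) {..<t}) [0..<t] = xs"
    proof
      fix xs assume "xs \<in> {xs. set xs \<subseteq> A \<and> length xs = t \<and> P xs}"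
      then have "length xs = t" by blast
      then show "map (restrict (nth xs) {..<t}) [0..<t] = xs" by (rule map_restrict_nth)
    qed
    show "(\<lambda>f. map f [0..<t]) ` {f \<in> {..<t} \<rightarrow>\<^sub>E A. P (map f [0..<t])}
        \<subseteq> {xs. set xs \<subseteq> A \<and> length xs = t \<and> P xs}"
    proof
      fix xs assume "xs \<in> (\<lambda>f. map f [0..<t]) ` {f \<in> {..<t} \<rightarrow>\<^sub>E A. P (map f [0..<t])}"
      then obtain f where "f \<in> {..<t} \<rightarrow>\<^sub>E A" "P (map f [0..<t])" and xs: "xs = map f [0..<t]"
        by blast
      then show "xs \<in> {xs. set xs \<subseteq> A \<and> length xs = t \<and> P xs}"
        by (auto simp: PiE_iff)
    qed
    show "(\<lambda>xs. restrict (nth xs) {..<t}) ` {xs. set xs \<subseteq> A \<and> length xs = t \<and> P xs}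
        \<subseteq> {f \<in> {..<t} \<rightarrow>\<^sub>E A. P (map f [0..<t])}"
    proof
      fix f assume "f \<in> (\<lambda>xs. restrict (nth xs) {..<t}) ` {xs. set xs \<subseteq> A \<and> length xs = t \<and> P xs}"
      then obtain xs where xs: "set xs \<subseteq> A" "length xs = t" "P xs"
        and f: "f = restrict (nth xs) {..<t}"
        by blast
      then have "f \<in> {..<t} \<rightarrow>\<^sub>E A"
        by (auto simp: nth_mem subsetD)
      moreover have "map f [0..<t] = xs"
        using map_restrict_nth[OF xs(2)] f by simp
      ultimately show "f \<in> {f \<in> {..<t} \<rightarrow>\<^sub>E A. P (map f [0..<t])}"
        using xs(3) by simp
    qed
  qed
qed

definition completions :: "'a::field^'n::finite^'k::finite \<Rightarrow> ('a^'k) set \<Rightarrow> nat \<Rightarrow> 'n list set"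
  where "completions G W t = {js. length js = t
    \<and> vec.span (W \<union> (\<lambda>j. column j G) ` set js) = UNIV
    \<and> (js = [] \<or> vec.span (W \<union> (\<lambda>j. column j G) ` set (butlast js)) \<noteq> UNIV)}"

lemma finite_completions:
  fixes G :: "'a::field^'n::finite^'k::finite"
  shows "finite (completions G W t)"
  using finite_lists_length_eq[OF finite, of "UNIV :: 'n set" t]
  by (rule finite_subset[rotated]) (auto simp: completions_def)

lemma completions_0: "completions G W 0 = (if vec.span W = UNIV then {[]} else {})"
proof (rule set_eqI)
  show "js \<in> completions G W 0 \<longleftrightarrow> js \<in> (if vec.span W = UNIV then {[]} else {})" for js
    by (cases js) (simp_all add: completions_def)
qed

lemma completions_Suc_spanning:
  assumes "vec.span W = UNIV"
  shows "completions G W (Suc t) = {}"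
proof -
  have "vec.span (W \<union> X) = UNIV" for X
    using assms vec.span_mono[of W "W \<union> X"] by blast
  then show ?thesis by (simp add: completions_def)
qed

lemma completions_Suc:
  assumes "vec.span W \<noteq> UNIV"
  shows "completions G W (Suc t) = (\<Union>j. Cons j ` completions G (insert (column j G) W) t)"
proof (rule set_eqI)
  fix js
  show "js \<in> completions G W (Suc t) \<longleftrightarrow> js \<in> (\<Union>j. Cons j ` completions G (insert (column j G) W) t)"
  proof (cases js)
    case Nil
    then show ?thesis by (auto simp: completions_def)
  next
    case (Cons j ks)
    have "j # ks \<in> (\<Union>i. Cons i ` completions G (insert (column i G) W) t)
        \<longleftrightarrow> ks \<in> completions G (insert (column j G) W) t"
      by blast
    moreover have "j # ks \<in> completions G W (Suc t) \<longleftrightarrow> length ks = t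
        \<and> vec.span (insert (column j G) W \<union> (\<lambda>j. column j G) ` set ks) = UNIV
        \<and> vec.span (if ks = [] then W
             else insert (column j G) W \<union> (\<lambda>j. column j G) ` set (butlast ks)) \<noteq> UNIV"
      by (simp add: completions_def insert_commute)
    ultimately show ?thesis
      using assms by (cases "ks = []") (auto simp: Cons completions_def)
  qed
qed

lemma card_completions_Suc:
  assumes "vec.span W \<noteq> UNIV"
  shows "card (completions G W (Suc t)) = (\<Sum>j\<in>UNIV. card (completions G (insert (column j G) W) t))"
  unfolding completions_Suc[OF assms]
  by (subst card_UN_disjoint) (auto simp: finite_completions card_image)

lemma stop_count_eq_card_completions:
  fixes G :: "'a::field^'n::finite^'k::finite"
  shows "stop_count G t = card (completions G {} t)"
proof -
  define stops where "stops js \<longleftrightarrow> vec.span ((\<lambda>j. column j G) ` set js) = UNIV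
    \<and> vec.span ((\<lambda>j. column j G) ` set (butlast js)) \<noteq> UNIV" for js
  have butlast_upt: "butlast [0..<t] = [0..<t - 1]"
    by (cases t) simp_all
  have image_upt: "(\<lambda>i. column (f i) G) ` {..<s} = (\<lambda>j. column j G) ` set (map f [0..<s])" for f s
    by (auto simp: image_image atLeast0LessThan)
  have "stop_count G t = card {f \<in> {..<t} \<rightarrow>\<^sub>E UNIV. stops (map f [0..<t])}"
    by (simp add: stop_count_def stops_def image_upt map_butlast[symmetric] butlast_upt)
  also have "\<dots> = card {js. set js \<subseteq> UNIV \<and> length js = t \<and> stops js}"
    by (rule card_PiE_filter_eq_card_lists)
  also have "\<dots> = card (completions G {} t)"
  proof (rule arg_cong[where f = card])
    have "vec.span ({} :: ('a^'k) set) \<noteq> UNIV"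
      using vec_span_eq_UNIV_iff_dim[of "{} :: ('a^'k) set"] by simp
    then show "{js. set js \<subseteq> UNIV \<and> length js = t \<and> stops js} = completions G {} t"
      unfolding completions_def stops_def by (intro set_eqI iffI) (auto simp del: vec.span_empty)
  qed
  finally show ?thesis .
qed

lemma card_completions_eq_hitting_time_prob:
  fixes G :: "'a::field^'n::finite^'k::finite"
  assumes cols: "\<And>W::('a^'k) set.
    real (card {j. column j G \<in> vec.span W}) = real CARD('n) * p (vec.dim W)"
  shows "real (card (completions G W t)) = real CARD('n) ^ t * hitting_time_prob CARD('k) p (vec.dim W) t"
proof (induction t arbitrary: W)
  case 0
  then show ?case by (simp add: completions_0 vec_span_eq_UNIV_iff_dim)
next
  case (Suc t)
  show ?case
  proof (cases "vec.span W = UNIV")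
    case True
    then show ?thesis by (simp add: completions_Suc_spanning vec_span_eq_UNIV_iff_dim)
  next
    case False
    define d where "d = vec.dim W"
    define J where "J = {j. column j G \<in> vec.span W}"
    define A where "A = real CARD('n) ^ t * hitting_time_prob CARD('k) p d t"
    define B where "B = real CARD('n) ^ t * hitting_time_prob CARD('k) p (Suc d) t"
    have insert_col: "real (card (completions G (insert (column j G) W) t)) = (if j \<in> J then A else B)"
      for j
      using Suc[of "insert (column j G) W"] by (simp add: vec.dim_insert J_def d_def A_def B_def)
    have "real (card (completions G W (Suc t)))
        = (\<Sum>j\<in>UNIV. real (card (completions G (insert (column j G) W) t)))"
      by (simp add: card_completions_Suc[OF False])
    also have "\<dots> = real (card J) * A + real (card (UNIV - J)) * B"
      unfolding insert_col by (subst sum.If_cases) (simp_all add: Compl_eq_Diff_UNIV)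
    also have "real (card (UNIV - J)) = real CARD('n) - real (card J)"
      by (simp add: card_Diff_subset of_nat_diff card_mono)
    also have "real (card J) = real CARD('n) * p d"
      using cols[of W] by (simp add: J_def d_def)
    finally have "real (card (completions G W (Suc t)))
        = real CARD('n) * p d * A + (real CARD('n) - real CARD('n) * p d) * B" .
    moreover have "\<not> CARD('k) \<le> d"
      using False by (simp add: d_def vec_span_eq_UNIV_iff_dim)
    then have "real CARD('n) ^ Suc t * hitting_time_prob CARD('k) p d (Suc t)
        = real CARD('n) * p d * A + (real CARD('n) - real CARD('n) * p d) * B"
      by (simp add: A_def B_def algebra_simps)
    ultimately show ?thesis
      by (simp add: d_def)
  qed
qed

text \<open>By \<open>cols\<close>, a uniformly drawn column lies in the span of \<open>W\<close> with probability \<open>p (dim W)\<close>,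
  so the dimension of the span of the drawn columns performs the chain of \<open>hitting_time_prob\<close>.\<close>
lemma expected_draws_eq_sum:
  fixes G :: "'a::field^'n::finite^'k::finite"
  assumes cols: "\<And>W::('a^'k) set.
      real (card {j. column j G \<in> vec.span W}) = real CARD('n) * p (vec.dim W)"
    and p: "\<And>d. d < CARD('k) \<Longrightarrow> 0 \<le> p d \<and> p d < 1"
  shows "expected_draws G = (\<Sum>i<CARD('k). 1 / (1 - p i))"
proof -
  have "real t * (real (stop_count G t) / real CARD('n) ^ t)
      = real t * hitting_time_prob CARD('k) p 0 t" for t
    using card_completions_eq_hitting_time_prob[OF cols, of "{}" t]
    by (simp add: stop_count_eq_card_completions)
  moreover have "(\<lambda>t. real t * hitting_time_prob CARD('k) p 0 t) sums (\<Sum>i<CARD('k). 1 / (1 - p i))"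
    using hitting_time_prob_sums[of "CARD('k)" p 0, OF p] by (simp add: atLeast0LessThan)
  ultimately show ?thesis
    by (simp add: expected_draws_def sums_iff)
qed

lemma sum_inverse_one_minus_power_ratio:
  fixes q :: real
  assumes "1 < q"
  shows "(\<Sum>i<k. 1 / (1 - (q ^ i - 1) / (q ^ k - 1)))
    = real k + (\<Sum>i = 1..k. (q ^ (i - 1) - 1) / (q ^ k - q ^ (i - 1)))"
proof -
  have "1 / (1 - (q ^ i - 1) / (q ^ k - 1)) = 1 + (q ^ i - 1) / (q ^ k - q ^ i)" if "i < k" for i
  proof -
    have "1 \<le> q ^ i" "q ^ i < q ^ k"
      using assms that by (simp_all add: one_le_power power_strict_increasing)
    then show ?thesis by (simp add: field_simps)
  qed
  then show ?thesis
    by (simp add: sum.distrib sum.atLeast1_atMost_eq)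
qed

lemma simplex_generator_bij_betw:
  fixes G :: "'a::field^'n::finite^'k::finite"
  assumes "simplex_generator G"
  shows "bij_betw (\<lambda>(c, j). c *s column j G) ((UNIV - {0}) \<times> UNIV) (UNIV - {0})"
proof (rule bij_betw_imageI)
  have col_nonzero: "\<And>j. column j G \<noteq> 0"
    and unique: "\<And>v. v \<noteq> 0 \<Longrightarrow> \<exists>!j. \<exists>c. c \<noteq> 0 \<and> v = c *s column j G"
    using assms unfolding simplex_generator_def by auto
  have "c = c' \<and> j = j'"
    if "c \<noteq> 0" "c' \<noteq> 0" and eq: "c *s column j G = c' *s column j' G" for c c' j j'
  proof
    have "c *s column j G \<noteq> 0" using \<open>c \<noteq> 0\<close> col_nonzero by (simp add: vector_mul_eq_0)
    then show "j = j'" using unique eq that by blast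
    then have "(c - c') *s column j G = 0" using eq by simp
    then show "c = c'" using col_nonzero by (simp add: vector_mul_eq_0)
  qed
  then show "inj_on (\<lambda>(c, j). c *s column j G) ((UNIV - {0}) \<times> UNIV)"
    by (auto intro!: inj_onI)
  show "(\<lambda>(c, j). c *s column j G) ` ((UNIV - {0}) \<times> UNIV) = UNIV - {0}"
  proof
    show "(\<lambda>(c, j). c *s column j G) ` ((UNIV - {0}) \<times> UNIV) \<subseteq> UNIV - {0}"
      using col_nonzero by (auto simp: vector_mul_eq_0)
    show "UNIV - {0} \<subseteq> (\<lambda>(c, j). c *s column j G) ` ((UNIV - {0}) \<times> UNIV)"
      using unique by fastforce
  qed
qed

lemma simplex_generator_card_columns_in_subspace:
  fixes G :: "'a::{finite,field}^'n::finite^'k::finite"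
  assumes G: "simplex_generator G" and V: "vec.subspace V"
  shows "(CARD('a) - 1) * card {j. column j G \<in> V} = card V - 1"
proof -
  let ?f = "\<lambda>(c, j). c *s column j G"
  let ?J = "{j. column j G \<in> V}"
  let ?units = "UNIV - {0 :: 'a}"
  note bij = simplex_generator_bij_betw[OF G]
  have image_eq: "?f ` (?units \<times> ?J) = V - {0}"
  proof
    show "?f ` (?units \<times> ?J) \<subseteq> V - {0}"
    proof
      fix v assume "v \<in> ?f ` (?units \<times> ?J)"
      then obtain c j where "c \<noteq> 0" "column j G \<in> V" and v_eq: "v = c *s column j G"
        by auto
      then have "v \<noteq> 0"
        using bij_betw_apply[OF bij, of "(c, j)"] by simp
      moreover have "v \<in> V"
        using v_eq \<open>column j G \<in> V\<close> vec.subspace_scale[OF V] by simp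
      ultimately show "v \<in> V - {0}" by simp
    qed
    show "V - {0} \<subseteq> ?f ` (?units \<times> ?J)"
    proof
      fix v assume v: "v \<in> V - {0}"
      then obtain c j where "c \<noteq> 0" and v_eq: "v = c *s column j G"
        using G unfolding simplex_generator_def by blast
      then have "column j G = inverse c *s v" by simp
      then have "column j G \<in> V" using v vec.subspace_scale[OF V] by simp
      then show "v \<in> ?f ` (?units \<times> ?J)"
        using \<open>c \<noteq> 0\<close> v_eq by (intro image_eqI[of _ _ "(c, j)"]) auto
    qed
  qed
  have "bij_betw ?f (?units \<times> ?J) (V - {0})"
    by (rule bij_betw_subset[OF bij _ image_eq]) blast
  then have "card (?units \<times> ?J) = card (V - {0})"
    by (rule bij_betw_same_card)
  then show ?thesis
    using vec.subspace_0[OF V] by (simp add: card_cartesian_product card_Diff_singleton)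
qed

lemma simplex_generator_card_columns_in_span:
  fixes G :: "'a::{finite,field}^'n::finite^'k::finite"
  assumes "simplex_generator G"
  shows "real (card {j. column j G \<in> vec.span W})
    = real CARD('n) * (real CARD('a) ^ vec.dim W - 1) / (real CARD('a) ^ CARD('k) - 1)"
proof -
  have q: "1 < real CARD('a)" using two_le_card_field[where 'a='a] by simp
  have count: "(real CARD('a) - 1) * real (card {j. column j G \<in> vec.span S})
      = real CARD('a) ^ vec.dim S - 1" for S :: "('a^'k) set"
  proof -
    have "(CARD('a) - 1) * card {j. column j G \<in> vec.span S} = CARD('a) ^ vec.dim S - 1"
      using simplex_generator_card_columns_in_subspace[OF assms vec.subspace_span]
      by (simp add: card_span_eq_power_dim)
    then have "real ((CARD('a) - 1) * card {j. column j G \<in> vec.span S}) = real (CARD('a) ^ vec.dim S - 1)"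
      by (rule arg_cong)
    then show ?thesis
      using q by (simp add: of_nat_diff)
  qed
  have count_UNIV: "(real CARD('a) - 1) * real CARD('n) = real CARD('a) ^ CARD('k) - 1"
    using count[of UNIV] by (simp add: card_cart_basis)
  have "real CARD('n) * (real CARD('a) ^ vec.dim W - 1) / (real CARD('a) ^ CARD('k) - 1)
      = real CARD('n) * ((real CARD('a) - 1) * real (card {j. column j G \<in> vec.span W}))
        / ((real CARD('a) - 1) * real CARD('n))"
    by (simp only: count count_UNIV)
  also have "\<dots> = real (card {j. column j G \<in> vec.span W})"
    using q by simp
  finally show ?thesis ..
qed

theorem mainTheorem2:
  fixes G :: "'a::{finite,field}^'n::finite^'k::finite"
    and q k n :: nat
  assumes "CARD('a) = q"
    and "k = CARD('k)" and "k \<ge> 2"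
    and "n = CARD('n)" and "n = (q ^ k - 1) div (q - 1)"
    and "simplex_generator G"
  shows "expected_draws G =
    real k + (\<Sum>i = 1..k. (real q ^ (i - 1) - 1) / (real q ^ k - real q ^ (i - 1)))"
proof -
  define p where "p d = (real q ^ d - 1) / (real q ^ k - 1)" for d
  have q: "1 < real q"
    using two_le_card_field[where 'a = 'a] assms(1) by simp
  have "expected_draws G = (\<Sum>i<k. 1 / (1 - p i))"
    unfolding assms(2)
  proof (rule expected_draws_eq_sum)
    show "real (card {j. column j G \<in> vec.span W}) = real CARD('n) * p (vec.dim W)" for W
      using simplex_generator_card_columns_in_span[OF assms(6)] assms(1,2) by (simp add: p_def)
    show "0 \<le> p i \<and> p i < 1" if "i < CARD('k)" for i
    proof -
      have "1 \<le> real q ^ i" "real q ^ i < real q ^ k"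
        using q that assms(2) by (simp_all add: one_le_power power_strict_increasing)
      then show ?thesis by (simp add: p_def)
    qed
  qed
  also have "\<dots> = real k + (\<Sum>i = 1..k. (real q ^ (i - 1) - 1) / (real q ^ k - real q ^ (i - 1)))"
    unfolding p_def using q by (rule sum_inverse_one_minus_power_ratio)
  finally show ?thesis .
qed

end
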